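(* Let the system and the memory each be a classical bit, i.e. states are density operators diagonal in a fixed basis $\{|0\rangle,|1\rangle\}$ of $\mathbb{C}^2$, and let $U$ be a permutation of the four product basis states $|i\rangle\otimes|k\rangle$ ($i,k\in\{0,1\}$), regarded as a unitary on $\mathbb{C}^2\otimes\mathbb{C}^2$. Then the memory depth $\Delta_U$ of the memory channel generated by $U$ satisfies $\Delta_U\in\{0,1,\infty\}$.
   Context: A memory channel generated by a fixed unitary $U$ on system $\otimes$ memory acts as follows. The memory starts in a state $\xi_1$ and uncorrelated inputs $\varrho_1,\varrho_2,\dots$ are fed in successively. In the $j$th use the memory is in state $\xi_j$, the $j$th input is transformed by $\mathcal{E}_j[\varrho]=\mathrm{tr}_{\rm mem}[U(\varrho\otimes\xi_j)U^\dagger]$, and the memory is updated to $\xi_{j+1}=\mathrm{tr}_{\rm sys}[U(\varrho_j\otimes\xi_j)U^\dagger]$. The memory depth $\Delta_U$ is the smallest integer $\Delta\ge 0$ such that for every $n>\Delta$ the channel $\mathcal{E}_n$ is independent of the initial memory state $\xi_1$ and of the inputs $\varrho_j$ with $j<n-\Delta$, for all admissible choices of these; if no such $\Delta$ exists, $\Delta_U=\infty$. In the classical case all states $\xi_1,\varrho_j$ are diagonal (probability distributions). *)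

theory Defs
  imports Main "HOL-Library.Extended_Nat"
begin

text \<open>Classical bits: a (diagonal) state of a bit is a probability distribution on bool.
  Index False = |0>, True = |1>.\<close>

definition is_dist :: "(bool \<Rightarrow> real) \<Rightarrow> bool" where
  "is_dist p \<longleftrightarrow> (\<forall>b. 0 \<le> p b) \<and> p False + p True = 1"

text \<open>A permutation U of the product basis (system bit, memory bit).
  Action of U on the diagonal product state p (x) q: push forward the joint
  distribution along U.\<close>

definition joint_out :: "(bool \<times> bool \<Rightarrow> bool \<times> bool) \<Rightarrow> (bool \<Rightarrow> real) \<Rightarrow> (bool \<Rightarrow> real)
    \<Rightarrow> bool \<times> bool \<Rightarrow> real" where
  "joint_out U p q x = (\<Sum>y\<in>{y. U y = x}. p (fst y) * q (snd y))"

definition chan :: "(bool \<times> bool \<Rightarrow> bool \<times> bool) \<Rightarrow> (bool \<Rightarrow> real) \<Rightarrow> (bool \<Rightarrow> real)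
    \<Rightarrow> bool \<Rightarrow> real" where
  "chan U xi rho i = joint_out U rho xi (i, False) + joint_out U rho xi (i, True)"

definition mem_upd :: "(bool \<times> bool \<Rightarrow> bool \<times> bool) \<Rightarrow> (bool \<Rightarrow> real) \<Rightarrow> (bool \<Rightarrow> real)
    \<Rightarrow> bool \<Rightarrow> real" where
  "mem_upd U rho xi k = joint_out U rho xi (False, k) + joint_out U rho xi (True, k)"

text \<open>Memory state after m uses: mem U xi1 rhos m = xi_(m+1); inputs rhos j for j \<ge> 1.\<close>
fun mem :: "(bool \<times> bool \<Rightarrow> bool \<times> bool) \<Rightarrow> (bool \<Rightarrow> real) \<Rightarrow> (nat \<Rightarrow> bool \<Rightarrow> real)
    \<Rightarrow> nat \<Rightarrow> bool \<Rightarrow> real" where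
  "mem U xi rhos 0 = xi"
| "mem U xi rhos (Suc m) = mem_upd U (rhos (Suc m)) (mem U xi rhos m)"

definition nth_chan :: "(bool \<times> bool \<Rightarrow> bool \<times> bool) \<Rightarrow> (bool \<Rightarrow> real) \<Rightarrow> (nat \<Rightarrow> bool \<Rightarrow> real)
    \<Rightarrow> nat \<Rightarrow> (bool \<Rightarrow> real) \<Rightarrow> bool \<Rightarrow> real" where
  "nth_chan U xi rhos n = chan U (mem U xi rhos (n - 1))"

definition depth_ok :: "(bool \<times> bool \<Rightarrow> bool \<times> bool) \<Rightarrow> nat \<Rightarrow> bool" where
  "depth_ok U D \<longleftrightarrow> (\<forall>n > D. \<forall>xi xi' rhos rhos'.
      is_dist xi \<and> is_dist xi' \<and> (\<forall>j. is_dist (rhos j)) \<and> (\<forall>j. is_dist (rhos' j)) \<and>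
      (\<forall>j. n - D \<le> j \<longrightarrow> rhos j = rhos' j) \<longrightarrow>
      (\<forall>rho. is_dist rho \<longrightarrow> nth_chan U xi rhos n rho = nth_chan U xi' rhos' n rho))"

definition memory_depth :: "(bool \<times> bool \<Rightarrow> bool \<times> bool) \<Rightarrow> enat" where
  "memory_depth U = (if \<exists>D. depth_ok U D then enat (LEAST D. depth_ok U D) else \<infinity>)"

end

theory Submission
  imports Defs
begin

text \<open>Everything is bilinear in (input, memory), so it suffices to look at point masses, on
  which the memory update of input c is a map h_c on the memory bit. If the channel does not
  depend on the memory, the depth is 0. Otherwise, if some h_c is a bijection of the bit, feeding
  c forever transports the initial memory bijectively into every later use, and the channel stays
  sensitive to it: the depth is infinite. If no h_c is a bijection, each h_c is constant, so one
  step forgets the old memory and the depth is at most 1.\<close>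

definition point_mass :: "bool \<Rightarrow> bool \<Rightarrow> real" where
  "point_mass b = (\<lambda>z. if z = b then 1 else 0)"

lemma is_dist_point_mass: "is_dist (point_mass b)"
  by (simp add: is_dist_def point_mass_def)

lemma joint_out_point_masses:
  "joint_out U (point_mass a) (point_mass b) z = (if U (a, b) = z then 1 else 0)"
proof -
  have "\<And>y. point_mass a (fst y) * point_mass b (snd y) = (if y = (a, b) then 1 else 0)"
    by (auto simp: point_mass_def)
  then show ?thesis
    by (simp add: joint_out_def)
qed

lemma joint_out_mix_mem:
  "joint_out U p q z = q False * joint_out U p (point_mass False) z
                     + q True * joint_out U p (point_mass True) z"
proof -
  have "\<And>y. p (fst y) * q (snd y) = q False * (p (fst y) * point_mass False (snd y))
                                   + q True * (p (fst y) * point_mass True (snd y))"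
    by (case_tac "snd y") (auto simp: point_mass_def)
  then show ?thesis
    unfolding joint_out_def by (simp add: sum.distrib sum_distrib_left)
qed

lemma joint_out_mix_input:
  "joint_out U p q z = p False * joint_out U (point_mass False) q z
                     + p True * joint_out U (point_mass True) q z"
proof -
  have "\<And>y. p (fst y) * q (snd y) = p False * (point_mass False (fst y) * q (snd y))
                                   + p True * (point_mass True (fst y) * q (snd y))"
    by (case_tac "fst y") (auto simp: point_mass_def)
  then show ?thesis
    unfolding joint_out_def by (simp add: sum.distrib sum_distrib_left)
qed

lemma chan_mix_mem:
  "chan U q rho i = q False * chan U (point_mass False) rho i + q True * chan U (point_mass True) rho i"
  unfolding chan_def by (subst (1 2) joint_out_mix_mem) (simp add: algebra_simps)

lemma mem_upd_mix_mem:
  "mem_upd U p q k = q False * mem_upd U p (point_mass False) k + q True * mem_upd U p (point_mass True) k"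
  unfolding mem_upd_def by (subst (1 2) joint_out_mix_mem) (simp add: algebra_simps)

lemma mem_upd_mix_input:
  "mem_upd U p q k = p False * mem_upd U (point_mass False) q k + p True * mem_upd U (point_mass True) q k"
  unfolding mem_upd_def by (subst (1 2) joint_out_mix_input) (simp add: algebra_simps)

lemma mem_upd_point_masses:
  "mem_upd U (point_mass a) (point_mass b) = point_mass (snd (U (a, b)))"
proof
  fix k
  obtain a' b' where "U (a, b) = (a', b')" by fastforce
  then show "mem_upd U (point_mass a) (point_mass b) k = point_mass (snd (U (a, b))) k"
    by (cases a') (simp_all only: mem_upd_def joint_out_point_masses, simp_all add: point_mass_def)
qed

lemma mem_upd_mass:
  "mem_upd U p q False + mem_upd U p q True = (p False + p True) * (q False + q True)"
  apply (subst (1 2) mem_upd_mix_input, subst (1 2 3 4) mem_upd_mix_mem)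
  apply (simp only: mem_upd_point_masses)
  apply (simp add: point_mass_def algebra_simps)
  done

lemma mem_mass:
  assumes "is_dist xi" and "\<And>j. is_dist (rhos j)"
  shows "mem U xi rhos m False + mem U xi rhos m True = 1"
  using assms by (induction m) (auto simp: mem_upd_mass is_dist_def)

lemma mem_point_masses_const_input:
  "mem U (point_mass x) (\<lambda>_. point_mass c) m = point_mass (((\<lambda>x. snd (U (c, x))) ^^ m) x)"
  by (induction m) (simp_all add: mem_upd_point_masses)

lemma chan_indep_mem:
  assumes "chan U (point_mass False) rho = chan U (point_mass True) rho"
    and "q False + q True = 1" and "q' False + q' True = 1"
  shows "chan U q rho = chan U q' rho"
proof
  fix i
  have "chan U r rho i = chan U (point_mass False) rho i" if "r False + r True = 1" for r
    using chan_mix_mem[of U r rho i] assms(1) that by (simp add: ring_distribs[symmetric])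
  then show "chan U q rho i = chan U q' rho i"
    using assms(2,3) by simp
qed

lemma mem_upd_indep_mem:
  assumes "\<forall>c. snd (U (c, False)) = snd (U (c, True))"
    and "q False + q True = 1" and "q' False + q' True = 1"
  shows "mem_upd U p q = mem_upd U p q'"
proof
  fix k
  have "mem_upd U p (point_mass False) = mem_upd U p (point_mass True)"
    by (rule ext, subst (1 2) mem_upd_mix_input) (simp add: mem_upd_point_masses assms(1))
  then have "mem_upd U p r k = mem_upd U p (point_mass False) k" if "r False + r True = 1" for r
    using mem_upd_mix_mem[of U p r k] that by (simp add: ring_distribs[symmetric])
  then show "mem_upd U p q k = mem_upd U p q' k"
    using assms(2,3) by simp
qed

lemma depth_ok_0_if_chan_indep_mem:
  assumes "\<forall>rho. is_dist rho \<longrightarrow> chan U (point_mass False) rho = chan U (point_mass True) rho"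
  shows "depth_ok U 0"
  unfolding depth_ok_def
proof (intro allI impI, elim conjE)
  fix n :: nat and xi xi' :: "bool \<Rightarrow> real" and rhos rhos' :: "nat \<Rightarrow> bool \<Rightarrow> real" and rho
  assume "is_dist xi" "is_dist xi'" "\<forall>j. is_dist (rhos j)" "\<forall>j. is_dist (rhos' j)" "is_dist rho"
  then show "nth_chan U xi rhos n rho = nth_chan U xi' rhos' n rho"
    unfolding nth_chan_def using assms by - (rule chan_indep_mem, simp_all add: mem_mass)
qed

lemma depth_ok_1_if_mem_upd_indep_mem:
  assumes "\<forall>c. snd (U (c, False)) = snd (U (c, True))"
  shows "depth_ok U 1"
  unfolding depth_ok_def
proof (intro allI impI, elim conjE)
  fix n :: nat and xi xi' :: "bool \<Rightarrow> real" and rhos rhos' :: "nat \<Rightarrow> bool \<Rightarrow> real" and rho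
  assume "1 < n" "is_dist xi" "is_dist xi'" "\<forall>j. is_dist (rhos j)" "\<forall>j. is_dist (rhos' j)"
    and "\<forall>j. n - 1 \<le> j \<longrightarrow> rhos j = rhos' j"
  moreover obtain m where m: "n - 1 = Suc m"
    using \<open>1 < n\<close> by (metis Suc_diff_Suc)
  ultimately have "mem U xi rhos (Suc m) = mem U xi' rhos' (Suc m)"
    by (simp add: mem_upd_indep_mem[OF assms, of "mem U xi rhos m" "mem U xi' rhos' m"] mem_mass)
  then show "nth_chan U xi rhos n rho = nth_chan U xi' rhos' n rho"
    unfolding nth_chan_def m by simp
qed

lemma mem_upd_indep_mem_if_depth_ok:
  assumes "depth_ok U D"
    and "is_dist rho" "chan U (point_mass False) rho \<noteq> chan U (point_mass True) rho"
  shows "snd (U (c, False)) = snd (U (c, True))"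
proof (rule ccontr)
  define h where "h = (\<lambda>x. snd (U (c, x)))"
  assume "snd (U (c, False)) \<noteq> snd (U (c, True))"
  then have "inj h"
    by (auto simp: inj_def h_def intro: bool.induct)
  then have "inj (h ^^ D)"
    by (rule inj_fn)
  then have "(h ^^ D) False \<noteq> (h ^^ D) True"
    by (simp add: inj_eq)
  then have differ: "chan U (point_mass ((h ^^ D) False)) rho \<noteq> chan U (point_mass ((h ^^ D) True)) rho"
    using assms(3) by (cases "(h ^^ D) False"; cases "(h ^^ D) True") (simp_all add: not_sym)
  have "nth_chan U (point_mass False) (\<lambda>_. point_mass c) (Suc D) rho
      = nth_chan U (point_mass True) (\<lambda>_. point_mass c) (Suc D) rho"
    using assms(1,2) unfolding depth_ok_def by (simp add: is_dist_point_mass)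
  then show False
    using differ by (simp add: nth_chan_def mem_point_masses_const_input h_def)
qed

lemma memory_depth_le: "depth_ok U D \<Longrightarrow> memory_depth U \<le> enat D"
  by (auto simp: memory_depth_def intro: Least_le)

theorem mainTheorem2:
  fixes U :: "bool \<times> bool \<Rightarrow> bool \<times> bool"
  assumes "bij U"
  shows "memory_depth U \<in> {0, 1, \<infinity>}"
proof (cases "\<exists>D. depth_ok U D")
  case False
  then show ?thesis by (simp add: memory_depth_def)
next
  case True
  then obtain D where D: "depth_ok U D" ..
  show ?thesis
  proof (cases "\<forall>rho. is_dist rho \<longrightarrow> chan U (point_mass False) rho = chan U (point_mass True) rho")
    case True
    then have "memory_depth U \<le> 0"
      using memory_depth_le depth_ok_0_if_chan_indep_mem zero_enat_def by metis
    then show ?thesis by simp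
  next
    case False
    then have "depth_ok U 1"
      using D depth_ok_1_if_mem_upd_indep_mem mem_upd_indep_mem_if_depth_ok by blast
    then have "memory_depth U \<le> 1"
      using memory_depth_le one_enat_def by metis
    then show ?thesis
      by (cases "memory_depth U") (auto simp: one_enat_def zero_enat_def)
  qed
qed

end
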